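(* For every infinite set $\Lambda\subseteq\mathbb{N}$ there exists an increasing sequence $(N_t)_{t\ge0}$ of elements of $\Lambda$ such that for all $n\ge0$, $c\in\{0,1\}$ and $k\in\mathbb{Z}$: (1) the limit $\mu_n(c,k)=\lim_{t\to\infty}\dfrac{C_n\big(c,k,(2/3)^nN_t\big)}{(2/3)^nN_t}$ exists; (2) $\mu_n(c,k+2^n)=\mu_n(c,k)$; (3) letting $q_n$ be an integer with $3q_n\equiv1\pmod{2^{n+1}}$, \[ \tfrac32\,\mu_n(c,k)=\mu_{n+1}(c,2q_nk)+\mu_{n+1}(\bar c,2q_nk-q_n)+\mu_{n+1}(c,2q_nk-2q_n), \] where $\bar c=1-c$; (4) $\mu_n(0,k)+\mu_n(1,k)=2^{-n}$.
   Context: The Thue--Morse word in base $3/2$ is the unique binary sequence $\mathbf{t}_{3/2}=(t_i)_{i\ge0}$ with $t_0=0$, $t_{3n}=t_{3n+1}=t_{2n}$ and $t_{3n+2}=1-t_{2n+1}$ for all $n\ge0$ (equivalently, $t_i$ is the digit sum modulo $2$ of the base-$3/2$ expansion of $i$). For $n\ge0$, $c\in\{0,1\}$, $k\in\mathbb{Z}$ and a real number $\alpha\ge0$, $C_n(c,k,\alpha)=\#\{i\in\mathbb{Z}: 0\le i<\alpha,\ t_i=c,\ i\equiv k\pmod{2^n}\}$. *)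

theory Defs
  imports "HOL-Analysis.Analysis" "HOL-Number_Theory.Cong"
begin

function tm32 :: "nat \<Rightarrow> nat" where
  "tm32 i = (if i = 0 then 0
             else if i mod 3 = 2 then 1 - tm32 (2 * (i div 3) + 1)
             else tm32 (2 * (i div 3)))"
  by auto
termination
  by (relation "Wellfounded.measure id") (auto, presburger+)

declare tm32.simps [simp del]

lemma tm32_0: "tm32 0 = 0" by (subst tm32.simps) simp

definition Ccount :: "nat \<Rightarrow> nat \<Rightarrow> int \<Rightarrow> real \<Rightarrow> nat" where
  "Ccount n c k \<alpha> = card {i::nat. real i < \<alpha> \<and> tm32 i = c \<and> [int i = k] (mod 2 ^ n)}"

end

theory Submission
  imports Defs "HOL-Library.Diagonal_Subsequence"
begin

(* The recursion of t sends the indices 3m, 3m+1, 3m+2 to 2m, 2m, 2m+1, and since 2q inverts 3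
   modulo 2^(n+1) up to the factor 2, the residue class k modulo 2^n of these indices corresponds
   to the classes 2qk, 2qk-2q, 2qk-q modulo 2^(n+1) of their images; the other parity never meets
   these classes. Hence C_n(c,k,3M) is exactly the sum of the three counts C_(n+1)(...,2M) of (3),
   and for real alpha the two sides of (3) and (4) differ by a bounded amount. After division by
   (2/3)^n N_t these errors vanish, so (3) and (4) hold for any limits; the limits exist along a
   diagonal subsequence of Lambda because the countably many normalised counts are bounded. *)

definition count_below :: "(nat \<Rightarrow> bool) \<Rightarrow> nat \<Rightarrow> nat" where
  "count_below P L = card {i. i < L \<and> P i}"

lemma count_below_0 [simp]: "count_below P 0 = 0"
  by (simp add: count_below_def)

lemma count_below_Suc [simp]: "count_below P (Suc L) = count_below P L + of_bool (P L)"
proof -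
  have "{i. i < Suc L \<and> P i} = (if P L then insert L {i. i < L \<and> P i} else {i. i < L \<and> P i})"
    by (auto simp: less_Suc_eq)
  then show ?thesis by (simp add: count_below_def)
qed

lemma count_below_add:
  "count_below P (L + d) = count_below P L + count_below (\<lambda>j. P (L + j)) d"
  by (induction d) simp_all

lemma count_below_le: "count_below P L \<le> L"
  by (induction L) simp_all

lemma count_below_disj:
  assumes "\<And>i. \<not> (P i \<and> Q i)"
  shows "count_below (\<lambda>i. P i \<or> Q i) L = count_below P L + count_below Q L"
  using assms by (induction L) auto

lemma count_below_lipschitz:
  "\<bar>real (count_below P L) - real (count_below P L')\<bar> \<le> \<bar>real L - real L'\<bar>"
proof -
  have "count_below P L \<le> count_below P (L + d) \<and> count_below P (L + d) \<le> count_below P L + d"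
    for L d using count_below_le[of "\<lambda>j. P (L + j)" d] by (simp add: count_below_add)
  from this[of L "L' - L"] this[of L' "L - L'"] show ?thesis
    by (cases "L \<le> L'") auto
qed

lemma nat_ceiling_dist: "\<bar>real (nat \<lceil>\<alpha>\<rceil>) - real (nat \<lceil>\<beta>\<rceil>)\<bar> \<le> \<bar>\<alpha> - \<beta>\<bar> + 1"
proof -
  have "real (nat \<lceil>x\<rceil>) = max 0 (of_int \<lceil>x\<rceil>)" for x :: real
    by (simp add: max_def)
  with ceiling_correct[of \<alpha>] ceiling_correct[of \<beta>] show ?thesis
    by (simp add: max_def abs_if) linarith
qed

lemma count_below_ceiling_dist:
  "\<bar>real (count_below P (nat \<lceil>\<alpha>\<rceil>)) - real (count_below P L)\<bar> \<le> \<bar>\<alpha> - real L\<bar> + 1"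
  using count_below_lipschitz[of P "nat \<lceil>\<alpha>\<rceil>" L] nat_ceiling_dist[of \<alpha> "real L"] by simp

lemma count_below_cong_modulus:
  assumes "0 < M"
  shows "count_below (\<lambda>i. [int i = k] (mod int M)) (M * D) = D"
proof (induction D)
  case (Suc D)
  have "[int (M * D + j) = k] (mod int M) \<longleftrightarrow> [int j = k] (mod int M)" for j
    by (simp add: cong_def mod_add_left_eq[symmetric])
  moreover have "{j. j < M \<and> [int j = k] (mod int M)} = {nat (k mod int M)}"
    using assms by (auto simp: cong_def nat_less_iff)
  ultimately have "count_below (\<lambda>j. [int (M * D + j) = k] (mod int M)) M = 1"
    by (simp add: count_below_def)
  then show ?case
    using Suc.IH count_below_add[of _ "M * D" M] by (simp add: add.commute)
qed simp

lemma cong_double_modulus_odd_iff: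
  fixes a b M :: int
  assumes "[a = b] (mod 2 * M)"
  shows "odd a \<longleftrightarrow> odd b"
proof -
  have "[a = b] (mod 2)" using assms by (rule cong_dvd_modulus) simp
  then show ?thesis by (simp add: cong_iff_dvd_diff)
qed

lemma cong_mult_3_iff:
  fixes x k q M :: int
  assumes "[3 * q = 1] (mod 2 * M)"
  shows "[3 * x = k] (mod M) \<longleftrightarrow> [2 * x = 2 * q * k] (mod 2 * M)"
proof -
  have q: "2 * M dvd 3 * q - 1" using assms by (simp add: cong_iff_dvd_diff)
  have "2 * M dvd 2 * (3 * x - k) \<longleftrightarrow> 2 * M dvd 2 * x - 2 * q * k"
  proof
    assume "2 * M dvd 2 * (3 * x - k)"
    then have "2 * M dvd q * (2 * (3 * x - k)) - (3 * q - 1) * (2 * x)"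
      using q by (rule dvd_diff[OF dvd_mult dvd_mult2])
    then show "2 * M dvd 2 * x - 2 * q * k" by (simp add: algebra_simps)
  next
    assume "2 * M dvd 2 * x - 2 * q * k"
    then have "2 * M dvd 3 * (2 * x - 2 * q * k) + (3 * q - 1) * (2 * k)"
      using q by (rule dvd_add[OF dvd_mult dvd_mult2])
    then show "2 * M dvd 2 * (3 * x - k)" by (simp add: algebra_simps)
  qed
  moreover have "M dvd 3 * x - k \<longleftrightarrow> 2 * M dvd 2 * (3 * x - k)"
    by (simp only: dvd_times_left_cancel_iff)
  ultimately show ?thesis by (simp add: cong_iff_dvd_diff)
qed

lemma cong_mult_3_plus_iff:
  fixes x k q M :: int
  assumes "[3 * q = 1] (mod 2 * M)"
  shows "[3 * x + 1 = k] (mod M) \<longleftrightarrow> [2 * x = 2 * q * k - 2 * q] (mod 2 * M)"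
    and "[3 * x + 2 = k] (mod M) \<longleftrightarrow> [2 * x + 1 = 2 * q * k - q] (mod 2 * M)"
proof -
  have plus_j: "[3 * x + j = k] (mod M) \<longleftrightarrow> [2 * x = 2 * q * (k - j)] (mod 2 * M)" for j
  proof -
    have "[3 * x + j = k] (mod M) \<longleftrightarrow> [3 * x = k - j] (mod M)"
      by (simp add: cong_iff_dvd_diff algebra_simps)
    also have "\<dots> \<longleftrightarrow> [2 * x = 2 * q * (k - j)] (mod 2 * M)" by (rule cong_mult_3_iff[OF assms])
    finally show ?thesis .
  qed
  have "2 * M dvd 3 * q - 1" using assms by (simp add: cong_iff_dvd_diff)
  then have "[a = b] (mod 2 * M) \<longleftrightarrow> [a + 1 = b + 3 * q] (mod 2 * M)" for a b
    using dvd_diff_left_iff[of "2 * M" "3 * q - 1" "a - b"] by (simp add: cong_iff_dvd_diff algebra_simps)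
  from this[of "2 * x" "2 * q * (k - 2)"] plus_j[of 2]
  show "[3 * x + 2 = k] (mod M) \<longleftrightarrow> [2 * x + 1 = 2 * q * k - q] (mod 2 * M)"
    by (simp add: algebra_simps)
  show "[3 * x + 1 = k] (mod M) \<longleftrightarrow> [2 * x = 2 * q * k - 2 * q] (mod 2 * M)"
    using plus_j[of 1] by (simp add: algebra_simps)
qed

lemma tm32_le_1: "tm32 i \<le> 1"
  by (induction i rule: tm32.induct) (subst tm32.simps, auto)

lemma tm32_3m: "tm32 (3 * m) = tm32 (2 * m)"
  by (subst tm32.simps) (auto simp: tm32_0)

lemma tm32_3m_plus_1: "tm32 (3 * m + 1) = tm32 (2 * m)"
proof -
  have "(3 * m + 1) div 3 = m" "(3 * m + 1) mod 3 = 1" by simp_all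
  then show ?thesis by (subst tm32.simps) simp
qed

lemma tm32_3m_plus_2: "tm32 (3 * m + 2) = 1 - tm32 (2 * m + 1)"
proof -
  have "(3 * m + 2) div 3 = m" "(3 * m + 2) mod 3 = 2" by presburger+
  then show ?thesis by (subst tm32.simps) simp
qed

definition tm32_class :: "nat \<Rightarrow> nat \<Rightarrow> int \<Rightarrow> nat \<Rightarrow> bool" where
  "tm32_class n c k i \<longleftrightarrow> tm32 i = c \<and> [int i = k] (mod 2 ^ n)"

lemma tm32_class_triple:
  assumes c: "c \<le> 1" and q: "[3 * q = 1] (mod 2 ^ (n + 1))"
  shows "tm32_class n c k (3 * m) \<longleftrightarrow> tm32_class (n + 1) c (2 * q * k) (2 * m)"
    and "tm32_class n c k (3 * m + 1) \<longleftrightarrow> tm32_class (n + 1) c (2 * q * k - 2 * q) (2 * m)"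
    and "tm32_class n c k (3 * m + 2) \<longleftrightarrow> tm32_class (n + 1) (1 - c) (2 * q * k - q) (2 * m + 1)"
    and "\<not> tm32_class (n + 1) c (2 * q * k) (2 * m + 1)"
    and "\<not> tm32_class (n + 1) c (2 * q * k - 2 * q) (2 * m + 1)"
    and "\<not> tm32_class (n + 1) (1 - c) (2 * q * k - q) (2 * m)"
proof -
  define M :: int where "M = 2 ^ n"
  have modulus: "(2::int) ^ (n + 1) = 2 * M" by (simp add: M_def)
  have q': "[3 * q = 1] (mod 2 * M)" using q by (simp add: M_def)
  then have "odd (3 * q)" using cong_double_modulus_odd_iff by fastforce
  then have "odd q" by simp
  have "[int (3 * m) = k] (mod M) \<longleftrightarrow> [int (2 * m) = 2 * q * k] (mod 2 * M)"
    and "[int (3 * m + 1) = k] (mod M) \<longleftrightarrow> [int (2 * m) = 2 * q * k - 2 * q] (mod 2 * M)"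
    and "[int (3 * m + 2) = k] (mod M) \<longleftrightarrow> [int (2 * m + 1) = 2 * q * k - q] (mod 2 * M)"
    using cong_mult_3_iff[OF q', of "int m" k] cong_mult_3_plus_iff[OF q', of "int m" k]
    by (simp_all only: of_nat_add of_nat_mult of_nat_numeral of_nat_1)
  moreover have "tm32 (3 * m + 2) = c \<longleftrightarrow> tm32 (2 * m + 1) = 1 - c"
    using tm32_3m_plus_2[of m] tm32_le_1[of "2 * m + 1"] c by linarith
  ultimately show "tm32_class n c k (3 * m) \<longleftrightarrow> tm32_class (n + 1) c (2 * q * k) (2 * m)"
    and "tm32_class n c k (3 * m + 1) \<longleftrightarrow> tm32_class (n + 1) c (2 * q * k - 2 * q) (2 * m)"
    and "tm32_class n c k (3 * m + 2) \<longleftrightarrow> tm32_class (n + 1) (1 - c) (2 * q * k - q) (2 * m + 1)"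
    using tm32_3m[of m] tm32_3m_plus_1[of m] by (simp_all add: tm32_class_def modulus M_def)
  show "\<not> tm32_class (n + 1) c (2 * q * k) (2 * m + 1)"
    and "\<not> tm32_class (n + 1) c (2 * q * k - 2 * q) (2 * m + 1)"
    and "\<not> tm32_class (n + 1) (1 - c) (2 * q * k - q) (2 * m)"
    using \<open>odd q\<close> by (auto simp: tm32_class_def modulus M_def dest!: cong_double_modulus_odd_iff)
qed

lemma Ccount_eq_count_below: "Ccount n c k \<alpha> = count_below (tm32_class n c k) (nat \<lceil>\<alpha>\<rceil>)"
proof -
  have "real i < \<alpha> \<longleftrightarrow> i < nat \<lceil>\<alpha>\<rceil>" for i
    by (metis less_ceiling_iff of_int_of_nat_eq zless_nat_eq_int_zless)
  then show ?thesis by (simp add: Ccount_def count_below_def tm32_class_def)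
qed

lemma count_below_tm32_class_triple:
  assumes "c \<le> 1" and "[3 * q = 1] (mod 2 ^ (n + 1))"
  shows "count_below (tm32_class n c k) (3 * M) =
      count_below (tm32_class (n + 1) c (2 * q * k)) (2 * M)
    + count_below (tm32_class (n + 1) (1 - c) (2 * q * k - q)) (2 * M)
    + count_below (tm32_class (n + 1) c (2 * q * k - 2 * q)) (2 * M)"
proof (induction M)
  case (Suc M)
  have unfold_Suc: "3 * Suc M = Suc (Suc (Suc (3 * M)))" "2 * Suc M = Suc (Suc (2 * M))" by simp_all
  show ?case
    unfolding unfold_Suc count_below_Suc using Suc.IH tm32_class_triple[OF assms, of k M] by simp
qed simp

lemma Ccount_add_modulus: "Ccount n c (k + 2 ^ n) \<alpha> = Ccount n c k \<alpha>"
  by (simp add: Ccount_def cong_def)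

lemma Ccount_recursion_error:
  assumes "0 \<le> \<alpha>" and "c \<le> 1" and "[3 * q = 1] (mod 2 ^ (n + 1))"
  shows "\<bar>real (Ccount n c k \<alpha>) - (real (Ccount (n + 1) c (2 * q * k) (2 / 3 * \<alpha>))
      + real (Ccount (n + 1) (1 - c) (2 * q * k - q) (2 / 3 * \<alpha>))
      + real (Ccount (n + 1) c (2 * q * k - 2 * q) (2 / 3 * \<alpha>)))\<bar> \<le> 13"
proof -
  define M where "M = nat \<lfloor>\<alpha> / 3\<rfloor>"
  define P Q\<^sub>1 Q\<^sub>2 Q\<^sub>3 where "P = tm32_class n c k"
    and "Q\<^sub>1 = tm32_class (n + 1) c (2 * q * k)" and "Q\<^sub>2 = tm32_class (n + 1) (1 - c) (2 * q * k - q)"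
    and "Q\<^sub>3 = tm32_class (n + 1) c (2 * q * k - 2 * q)"
  have "real M \<le> \<alpha> / 3" "\<alpha> / 3 < real M + 1"
    using floor_correct[of "\<alpha> / 3"] assms(1) by (simp_all add: M_def)
  then have "\<bar>\<alpha> - real (3 * M)\<bar> \<le> 3" "\<bar>2 / 3 * \<alpha> - real (2 * M)\<bar> \<le> 2"
    by (simp_all add: abs_le_iff)
  then have P_err: "\<bar>real (count_below P (nat \<lceil>\<alpha>\<rceil>)) - real (count_below P (3 * M))\<bar> \<le> 4"
    and Q_err: "\<bar>real (count_below Q (nat \<lceil>2 / 3 * \<alpha>\<rceil>)) - real (count_below Q (2 * M))\<bar> \<le> 3" for Q
    using count_below_ceiling_dist[of P \<alpha> "3 * M"] count_below_ceiling_dist[of Q "2 / 3 * \<alpha>" "2 * M"]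
    by linarith+
  have "real (count_below P (3 * M)) = real (count_below Q\<^sub>1 (2 * M))
      + real (count_below Q\<^sub>2 (2 * M)) + real (count_below Q\<^sub>3 (2 * M))"
    unfolding P_def Q\<^sub>1_def Q\<^sub>2_def Q\<^sub>3_def
    by (simp only: count_below_tm32_class_triple[OF assms(2,3)] of_nat_add)
  then show ?thesis
    unfolding Ccount_eq_count_below P_def[symmetric] Q\<^sub>1_def[symmetric] Q\<^sub>2_def[symmetric]
      Q\<^sub>3_def[symmetric]
    using P_err Q_err[of Q\<^sub>1] Q_err[of Q\<^sub>2] Q_err[of Q\<^sub>3] by (simp only: abs_le_iff) linarith
qed

lemma Ccount_sum_error:
  assumes "0 \<le> \<alpha>"
  shows "\<bar>real (Ccount n 0 k \<alpha>) + real (Ccount n 1 k \<alpha>) - \<alpha> / 2 ^ n\<bar> \<le> 2 ^ n + 2"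
proof -
  define R where "R i \<longleftrightarrow> [int i = k] (mod int (2 ^ n))" for i
  define D where "D = nat \<lfloor>\<alpha> / 2 ^ n\<rfloor>"
  have "Ccount n 0 k \<alpha> + Ccount n 1 k \<alpha> = count_below R (nat \<lceil>\<alpha>\<rceil>)"
  proof -
    have "R i \<longleftrightarrow> tm32_class n 0 k i \<or> tm32_class n 1 k i" for i
      using tm32_le_1[of i] by (auto simp: R_def tm32_class_def)
    then have R_eq: "R = (\<lambda>i. tm32_class n 0 k i \<or> tm32_class n 1 k i)"
      by (simp add: fun_eq_iff)
    show ?thesis
      unfolding Ccount_eq_count_below R_eq by (rule count_below_disj[symmetric]) (simp add: tm32_class_def)
  qed
  then have sum_eq: "real (Ccount n 0 k \<alpha>) + real (Ccount n 1 k \<alpha>) = real (count_below R (nat \<lceil>\<alpha>\<rceil>))"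
    by (metis of_nat_add)
  have D_bounds: "real D \<le> \<alpha> / 2 ^ n" "\<alpha> / 2 ^ n < real D + 1"
    using floor_correct[of "\<alpha> / 2 ^ n"] assms by (simp_all add: D_def)
  then have "\<bar>\<alpha> - real (2 ^ n * D)\<bar> \<le> 2 ^ n"
    by (simp add: abs_le_iff field_simps)
  moreover have "count_below R (2 ^ n * D) = D"
    unfolding R_def by (rule count_below_cong_modulus) simp
  ultimately have "\<bar>real (count_below R (nat \<lceil>\<alpha>\<rceil>)) - real D\<bar> \<le> 2 ^ n + 1"
    using count_below_ceiling_dist[of R \<alpha> "2 ^ n * D"] by simp
  then show ?thesis
    unfolding sum_eq using D_bounds by (simp only: abs_le_iff) linarith
qed

definition Ccount_ratio :: "nat \<Rightarrow> nat \<Rightarrow> int \<Rightarrow> real \<Rightarrow> real" where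
  "Ccount_ratio n c k \<alpha> = real (Ccount n c k \<alpha>) / \<alpha>"

lemma bounded_Ccount_ratio: "bounded (range (\<lambda>x. Ccount_ratio n c k ((2 / 3) ^ n * real x)))"
proof (rule boundedI)
  fix y assume "y \<in> range (\<lambda>x. Ccount_ratio n c k ((2 / 3) ^ n * real x))"
  then obtain x where y: "y = Ccount_ratio n c k ((2 / 3) ^ n * real x)" by blast
  have "(2 / 3) ^ n * real x \<le> real x"
    by (rule mult_left_le_one_le) (simp_all add: power_le_one)
  then have "nat \<lceil>(2 / 3) ^ n * real x\<rceil> \<le> x" by (simp only: nat_ceiling_le_eq)
  then have "Ccount n c k ((2 / 3) ^ n * real x) \<le> x"
    unfolding Ccount_eq_count_below by (rule order_trans[OF count_below_le])
  then have "real (Ccount n c k ((2 / 3) ^ n * real x)) \<le> real x" by simp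
  then have "y \<le> real x / ((2 / 3) ^ n * real x)"
    unfolding y Ccount_ratio_def by (rule divide_right_mono) simp
  also have "\<dots> \<le> (3 / 2) ^ n"
    by (cases "x = 0") (simp_all add: power_divide)
  finally show "norm y \<le> (3 / 2) ^ n"
    unfolding y Ccount_ratio_def by simp
qed

lemma tendsto_eq_if_diff_le_div_at_top:
  fixes u v a :: "'a \<Rightarrow> real"
  assumes "F \<noteq> bot" and "(u \<longlongrightarrow> x) F" and "(v \<longlongrightarrow> y) F" and "filterlim a at_top F"
    and "\<forall>\<^sub>F t in F. \<bar>u t - v t\<bar> \<le> K / a t"
  shows "x = y"
proof -
  have "((\<lambda>t. K / a t) \<longlongrightarrow> 0) F"
    by (rule tendsto_divide_0[OF tendsto_const filterlim_at_top_imp_at_infinity[OF assms(4)]])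
  moreover have "\<forall>\<^sub>F t in F. norm (u t - v t) \<le> K / a t" using assms(5) by simp
  ultimately have "((\<lambda>t. u t - v t) \<longlongrightarrow> 0) F" by (rule Lim_null_comparison[rotated])
  moreover have "((\<lambda>t. u t - v t) \<longlongrightarrow> x - y) F" using assms(2,3) by (rule tendsto_diff)
  ultimately have "x - y = 0" by (rule tendsto_unique[OF assms(1), rotated])
  then show "x = y" by simp
qed

lemma Ccount_ratio_recursion_limit:
  assumes "c \<le> 1" and "[3 * q = 1] (mod 2 ^ (n + 1))" and A: "filterlim A at_top sequentially"
    and "(\<lambda>t. Ccount_ratio n c k (A t)) \<longlonglongrightarrow> x"
    and "(\<lambda>t. Ccount_ratio (n + 1) c (2 * q * k) (2 / 3 * A t)) \<longlonglongrightarrow> y\<^sub>1"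
    and "(\<lambda>t. Ccount_ratio (n + 1) (1 - c) (2 * q * k - q) (2 / 3 * A t)) \<longlonglongrightarrow> y\<^sub>2"
    and "(\<lambda>t. Ccount_ratio (n + 1) c (2 * q * k - 2 * q) (2 / 3 * A t)) \<longlonglongrightarrow> y\<^sub>3"
  shows "3 / 2 * x = y\<^sub>1 + y\<^sub>2 + y\<^sub>3"
proof (rule tendsto_eq_if_diff_le_div_at_top[OF _ _ _ A])
  show "(\<lambda>t. 3 / 2 * Ccount_ratio n c k (A t)) \<longlonglongrightarrow> 3 / 2 * x"
    using assms(4) by (rule tendsto_mult_left)
  show "(\<lambda>t. Ccount_ratio (n + 1) c (2 * q * k) (2 / 3 * A t)
      + Ccount_ratio (n + 1) (1 - c) (2 * q * k - q) (2 / 3 * A t)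
      + Ccount_ratio (n + 1) c (2 * q * k - 2 * q) (2 / 3 * A t)) \<longlonglongrightarrow> y\<^sub>1 + y\<^sub>2 + y\<^sub>3"
    using assms(5-7) by (intro tendsto_add)
  have "\<forall>\<^sub>F t in sequentially. 0 < A t" using A by (simp add: filterlim_at_top_dense)
  then show "\<forall>\<^sub>F t in sequentially. \<bar>3 / 2 * Ccount_ratio n c k (A t)
      - (Ccount_ratio (n + 1) c (2 * q * k) (2 / 3 * A t)
      + Ccount_ratio (n + 1) (1 - c) (2 * q * k - q) (2 / 3 * A t)
      + Ccount_ratio (n + 1) c (2 * q * k - 2 * q) (2 / 3 * A t))\<bar> \<le> 3 / 2 * 13 / A t"
  proof eventually_elim
    case (elim t)
    define E where "E = real (Ccount n c k (A t)) - (real (Ccount (n + 1) c (2 * q * k) (2 / 3 * A t))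
      + real (Ccount (n + 1) (1 - c) (2 * q * k - q) (2 / 3 * A t))
      + real (Ccount (n + 1) c (2 * q * k - 2 * q) (2 / 3 * A t)))"
    have "3 / 2 * Ccount_ratio n c k (A t) - (Ccount_ratio (n + 1) c (2 * q * k) (2 / 3 * A t)
      + Ccount_ratio (n + 1) (1 - c) (2 * q * k - q) (2 / 3 * A t)
      + Ccount_ratio (n + 1) c (2 * q * k - 2 * q) (2 / 3 * A t)) = 3 / 2 * E / A t"
      using elim by (simp add: Ccount_ratio_def E_def field_simps)
    moreover have "\<bar>E\<bar> \<le> 13"
      unfolding E_def using Ccount_recursion_error[OF less_imp_le[OF elim] assms(1,2)] .
    ultimately show ?case
      using elim by (simp add: abs_mult divide_right_mono)
  qed
qed simp

lemma Ccount_ratio_sum_limit: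
  assumes A: "filterlim A at_top sequentially"
    and "(\<lambda>t. Ccount_ratio n 0 k (A t)) \<longlonglongrightarrow> x\<^sub>0" and "(\<lambda>t. Ccount_ratio n 1 k (A t)) \<longlonglongrightarrow> x\<^sub>1"
  shows "x\<^sub>0 + x\<^sub>1 = 1 / 2 ^ n"
proof (rule tendsto_eq_if_diff_le_div_at_top[OF _ _ tendsto_const A])
  show "(\<lambda>t. Ccount_ratio n 0 k (A t) + Ccount_ratio n 1 k (A t)) \<longlonglongrightarrow> x\<^sub>0 + x\<^sub>1"
    using assms(2,3) by (rule tendsto_add)
  have "\<forall>\<^sub>F t in sequentially. 0 < A t" using A by (simp add: filterlim_at_top_dense)
  then show "\<forall>\<^sub>F t in sequentially.
      \<bar>Ccount_ratio n 0 k (A t) + Ccount_ratio n 1 k (A t) - 1 / 2 ^ n\<bar> \<le> (2 ^ n + 2) / A t"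
  proof eventually_elim
    case (elim t)
    define E where "E = real (Ccount n 0 k (A t)) + real (Ccount n 1 k (A t)) - A t / 2 ^ n"
    have "Ccount_ratio n 0 k (A t) + Ccount_ratio n 1 k (A t) - 1 / 2 ^ n = E / A t"
      using elim by (simp add: Ccount_ratio_def E_def field_simps)
    moreover have "\<bar>E\<bar> \<le> 2 ^ n + 2"
      unfolding E_def using Ccount_sum_error[OF less_imp_le[OF elim]] .
    ultimately show ?case
      using elim by (simp add: divide_right_mono)
  qed
qed simp

lemma convergent_subseq_countable_family:
  fixes f :: "'i::countable \<Rightarrow> nat \<Rightarrow> 'a::heine_borel"
  assumes "\<And>i. bounded (range (f i))"
  obtains r where "strict_mono r" and "\<And>i. convergent (f i \<circ> r)"
proof -
  define P where "P m s \<longleftrightarrow> convergent (f (from_nat m) \<circ> s)" for m and s :: "nat \<Rightarrow> nat"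
  interpret subseqs P
  proof
    fix m and s :: "nat \<Rightarrow> nat"
    have "bounded (range (f (from_nat m) \<circ> s))"
      using assms by (rule bounded_subset) auto
    then obtain l r where "strict_mono r" "(f (from_nat m) \<circ> s \<circ> r) \<longlonglongrightarrow> l"
      using bounded_imp_convergent_subsequence by blast
    then show "\<exists>r. strict_mono r \<and> P m (s \<circ> r)"
      by (auto simp: P_def convergent_def o_assoc)
  qed
  have diag: "P m (diagseq \<circ> (+) (Suc m))" for m
    by (rule diagseq_holds) (auto simp: P_def o_assoc intro: convergent_subseq_convergent)
  have "convergent (\<lambda>t. (f i \<circ> diagseq) (t + Suc (to_nat i)))" for i
    using diag[of "to_nat i"] by (simp add: P_def o_def add.commute)
  then have "convergent (f i \<circ> diagseq)" for i
    by (simp only: convergent_ignore_initial_segment)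
  with subseq_diagseq show thesis by (rule that)
qed

lemma convergent_Ccount_ratio_subseq:
  assumes "infinite \<Lambda>"
  obtains N where "strict_mono N" and "\<And>t. N t \<in> \<Lambda>"
    and "\<And>n c k. convergent (\<lambda>t. Ccount_ratio n c k ((2 / 3) ^ n * real (N t)))"
proof -
  obtain N\<^sub>0 :: "nat \<Rightarrow> nat" where N\<^sub>0: "strict_mono N\<^sub>0" "\<forall>t. N\<^sub>0 t \<in> \<Lambda>"
    using infinite_enumerate[OF assms] by blast
  define f :: "nat \<times> nat \<times> int \<Rightarrow> nat \<Rightarrow> real"
    where "f = (\<lambda>(n, c, k) t. Ccount_ratio n c k ((2 / 3) ^ n * real (N\<^sub>0 t)))"
  have "bounded (range (f i))" for i
  proof -
    obtain n c k where i: "i = (n, c, k)" by (rule prod_cases3)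
    show ?thesis using bounded_Ccount_ratio[of n c k] by (rule bounded_subset) (auto simp: f_def i)
  qed
  then obtain r where r: "strict_mono r" "\<And>i. convergent (f i \<circ> r)"
    using convergent_subseq_countable_family by blast
  show thesis
  proof (rule that[of "N\<^sub>0 \<circ> r"])
    show "strict_mono (N\<^sub>0 \<circ> r)" using N\<^sub>0(1) r(1) by (rule strict_mono_o)
    show "(N\<^sub>0 \<circ> r) t \<in> \<Lambda>" for t using N\<^sub>0(2) by simp
    show "convergent (\<lambda>t. Ccount_ratio n c k ((2 / 3) ^ n * real ((N\<^sub>0 \<circ> r) t)))" for n c k
      using r(2)[of "(n, c, k)"] by (simp add: f_def o_def)
  qed
qed

theorem lemma19:
  fixes \<Lambda> :: "nat set"
  assumes "infinite \<Lambda>"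
  shows "\<exists>N :: nat \<Rightarrow> nat. strict_mono N \<and> (\<forall>t. N t \<in> \<Lambda>) \<and>
    (\<exists>\<mu> :: nat \<Rightarrow> nat \<Rightarrow> int \<Rightarrow> real.
      (\<forall>n c k. c \<le> 1 \<longrightarrow>
         (\<lambda>t. real (Ccount n c k ((2/3)^n * real (N t))) / ((2/3)^n * real (N t)))
           \<longlonglongrightarrow> \<mu> n c k) \<and>
      (\<forall>n c k. c \<le> 1 \<longrightarrow> \<mu> n c (k + 2^n) = \<mu> n c k) \<and>
      (\<forall>n c k q. c \<le> 1 \<longrightarrow> [3 * q = 1] (mod 2^(n+1)) \<longrightarrow>
         3/2 * \<mu> n c k = \<mu> (n+1) c (2*q*k) + \<mu> (n+1) (1 - c) (2*q*k - q)
                          + \<mu> (n+1) c (2*q*k - 2*q)) \<and>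
      (\<forall>n k. \<mu> n 0 k + \<mu> n 1 k = 1 / 2^n))"
proof -
  obtain N where N: "strict_mono N" "\<And>t. N t \<in> \<Lambda>"
    and conv: "\<And>n c k. convergent (\<lambda>t. Ccount_ratio n c k ((2 / 3) ^ n * real (N t)))"
    using convergent_Ccount_ratio_subseq[OF assms] by blast
  define A where "A n t = (2 / 3) ^ n * real (N t)" for n t
  define \<mu> where "\<mu> n c k = lim (\<lambda>t. Ccount_ratio n c k (A n t))" for n c k
  have lim: "(\<lambda>t. Ccount_ratio n c k (A n t)) \<longlonglongrightarrow> \<mu> n c k" for n c k
    using conv by (simp add: \<mu>_def A_def convergent_LIMSEQ_iff)
  have A: "filterlim (A n) at_top sequentially" for n
    unfolding A_def by (intro filterlim_tendsto_pos_mult_at_top[OF tendsto_const]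
        filterlim_compose[OF filterlim_real_sequentially filterlim_subseq[OF N(1)]]) simp
  have A_Suc: "A (n + 1) t = 2 / 3 * A n t" for n t by (simp add: A_def)
  have lim_Suc: "(\<lambda>t. Ccount_ratio (n + 1) c k (2 / 3 * A n t)) \<longlonglongrightarrow> \<mu> (n + 1) c k" for n c k
    using lim[of "n + 1" c k] by (simp only: A_Suc)
  show ?thesis
  proof (intro exI[of _ N] exI[of _ \<mu>] conjI allI impI)
    show "(\<lambda>t. real (Ccount n c k ((2/3)^n * real (N t))) / ((2/3)^n * real (N t))) \<longlonglongrightarrow> \<mu> n c k"
      for n c k using lim by (simp add: A_def Ccount_ratio_def)
    show "\<mu> n c (k + 2 ^ n) = \<mu> n c k" for n c k
      by (simp add: \<mu>_def Ccount_ratio_def Ccount_add_modulus)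
    show "3/2 * \<mu> n c k = \<mu> (n+1) c (2*q*k) + \<mu> (n+1) (1 - c) (2*q*k - q) + \<mu> (n+1) c (2*q*k - 2*q)"
      if "c \<le> 1" and "[3 * q = 1] (mod 2^(n+1))" for n c k q
      using Ccount_ratio_recursion_limit[OF that A lim lim_Suc lim_Suc lim_Suc] .
    show "\<mu> n 0 k + \<mu> n 1 k = 1 / 2 ^ n" for n k
      using Ccount_ratio_sum_limit[OF A lim lim] .
  qed (use N in auto)
qed

end
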